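(* Let $M$ be a unicyclic partial multiplication matrix. There is a bound $B$, depending only on $M$, such that for every $M$-coil $\pi$ and every $M$-gridding $\pi^\#$ of $\pi$, the gridded permutation $\pi^\#$ has at most $B$ misplaced points.
   Context: A gridding matrix has entries in $\{0,1,-1\}$; an $m\times n$ one has $m$ columns, $n$ rows, $M_{ij}$ in column $i$ from the left and row $j$ from the bottom. An $M$-gridding of a permutation $\pi$ of length $L$ is a choice of vertical lines $\tfrac12=v_0\le\dots\le v_m=L+\tfrac12$ and horizontal lines $\tfrac12=h_0\le\dots\le h_n=L+\tfrac12$, not through points of $\pi$, such that in each cell $C_{ij}=\{v_{i-1}<x<v_i,\ h_{j-1}<y<h_j\}$ the points of $\pi$ are absent if $M_{ij}=0$, increasing if $M_{ij}=1$, decreasing if $M_{ij}=-1$; the result is an $M$-gridded permutation. The row-column graph $G_M$ is the bipartite graph on $\{1,\dots,m\}\cup\{1',\dots,n'\}$ with edge $ij'$ iff $M_{ij}\neq0$ (cell $(i,j)$ corresponds to edge $ij'$); $M$ is unicyclic if $G_M$ has exactly one cycle. In an $M$-gridding, a point is misplaced if it lies in a cell that does not correspond to an edge of the cycle of $G_M$. $M$ is a partial multiplication matrix: there are fixed $c_1,\dots,c_m,r_1,\dots,r_n\in\{\pm1\}$ with $M_{ij}=c_ir_j$ for each non-zero entry. Column $i$ is oriented left-to-right if $c_i=1$, right-to-left otherwise; row $j$ bottom-to-top if $r_j=1$, top-to-bottom otherwise. The orientation digraph of an $M$-gridded permutation has its points as vertices with $x\to y$ whenever $x,y$ lie in a common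 column of cells and $x$ precedes $y$ in that column's orientation, or in a common row of cells and $x$ precedes $y$ in that row's orientation. Let $\ell$ be the length of the cycle of $G_M$. A gridded $M$-coil is an $M$-gridded permutation of length $n>\ell$ with an ordering $v_1,\dots,v_n$ of its points and a labelling by $1,\dots,\ell$ of the cells corresponding to the edges of the cycle such that (C1) $v_i$ lies in cell $i\bmod\ell$ (residues in $\{1,\dots,\ell\}$); (C2) $v_{i-1}\to v_i$ for $1<i\le n$; (C3) $v_i\to v_{i-\ell-1}$ for $\ell+1<i\le n$; (C4) $v_{\ell+1}\to v_1$. An $M$-coil is a permutation having some $M$-gridding which is a gridded $M$-coil. *)

theory Defs
  imports Main
begin

(* A gridding matrix with m columns and n rows is a function M :: nat => nat => int,
   M i j the entry in column i (1..m, from the left) and row j (1..n, from the bottom).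
   A permutation of length L is pi :: nat => nat, a bijection of {1..L}; its points are
   identified with their positions p in {1..L} (the point (p, pi p)).
   Grid lines: the vertical line v_i = vv i + 1/2 with vv i :: nat, similarly for rows,
   so the line through no point is encoded by the integer just below it. *)

definition gridding_matrix :: "nat \<Rightarrow> nat \<Rightarrow> (nat \<Rightarrow> nat \<Rightarrow> int) \<Rightarrow> bool" where
  "gridding_matrix m n M \<longleftrightarrow> (\<forall>i\<in>{1..m}. \<forall>j\<in>{1..n}. M i j \<in> {-1, 0, 1})"

definition is_perm :: "nat \<Rightarrow> (nat \<Rightarrow> nat) \<Rightarrow> bool" where
  "is_perm L pi \<longleftrightarrow> bij_betw pi {1..L} {1..L}"

definition in_col :: "(nat \<Rightarrow> nat) \<Rightarrow> nat \<Rightarrow> nat \<Rightarrow> bool" where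
  "in_col vv i p \<longleftrightarrow> vv (i - 1) < p \<and> p \<le> vv i"

definition in_row :: "(nat \<Rightarrow> nat) \<Rightarrow> (nat \<Rightarrow> nat) \<Rightarrow> nat \<Rightarrow> nat \<Rightarrow> bool" where
  "in_row pi hh j p \<longleftrightarrow> hh (j - 1) < pi p \<and> pi p \<le> hh j"

definition in_cell :: "(nat \<Rightarrow> nat) \<Rightarrow> (nat \<Rightarrow> nat) \<Rightarrow> (nat \<Rightarrow> nat) \<Rightarrow> nat \<times> nat \<Rightarrow> nat \<Rightarrow> bool" where
  "in_cell pi vv hh ij p \<longleftrightarrow> in_col vv (fst ij) p \<and> in_row pi hh (snd ij) p"

definition is_gridding ::
  "nat \<Rightarrow> nat \<Rightarrow> (nat \<Rightarrow> nat \<Rightarrow> int) \<Rightarrow> nat \<Rightarrow> (nat \<Rightarrow> nat) \<Rightarrow> (nat \<Rightarrow> nat) \<Rightarrow> (nat \<Rightarrow> nat) \<Rightarrow> bool" where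
  "is_gridding m n M L pi vv hh \<longleftrightarrow>
     vv 0 = 0 \<and> vv m = L \<and> (\<forall>i<m. vv i \<le> vv (Suc i)) \<and>
     hh 0 = 0 \<and> hh n = L \<and> (\<forall>j<n. hh j \<le> hh (Suc j)) \<and>
     (\<forall>i\<in>{1..m}. \<forall>j\<in>{1..n}.
        (M i j = 0 \<longrightarrow> (\<forall>p\<in>{1..L}. \<not> in_cell pi vv hh (i, j) p)) \<and>
        (M i j = 1 \<longrightarrow> (\<forall>p\<in>{1..L}. \<forall>q\<in>{1..L}.
             in_cell pi vv hh (i, j) p \<and> in_cell pi vv hh (i, j) q \<and> p < q \<longrightarrow> pi p < pi q)) \<and>
        (M i j = -1 \<longrightarrow> (\<forall>p\<in>{1..L}. \<forall>q\<in>{1..L}.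
             in_cell pi vv hh (i, j) p \<and> in_cell pi vv hh (i, j) q \<and> p < q \<longrightarrow> pi p > pi q)))"

(* Cycles of the row-column graph G_M, given as their edge sets (edge ij' = cell (i,j)). *)
definition is_cycle :: "nat \<Rightarrow> nat \<Rightarrow> (nat \<Rightarrow> nat \<Rightarrow> int) \<Rightarrow> (nat \<times> nat) set \<Rightarrow> bool" where
  "is_cycle m n M C \<longleftrightarrow>
     (\<exists>k ic jc. k \<ge> 2 \<and> inj_on ic {0..<k} \<and> inj_on jc {0..<k} \<and>
        ic ` {0..<k} \<subseteq> {1..m} \<and> jc ` {0..<k} \<subseteq> {1..n} \<and>
        (\<forall>t<k. M (ic t) (jc t) \<noteq> 0 \<and> M (ic (Suc t mod k)) (jc t) \<noteq> 0) \<and>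
        C = (\<lambda>t. (ic t, jc t)) ` {0..<k} \<union> (\<lambda>t. (ic (Suc t mod k), jc t)) ` {0..<k})"

definition unicyclic :: "nat \<Rightarrow> nat \<Rightarrow> (nat \<Rightarrow> nat \<Rightarrow> int) \<Rightarrow> bool" where
  "unicyclic m n M \<longleftrightarrow> (\<exists>!C. is_cycle m n M C)"

definition the_cycle :: "nat \<Rightarrow> nat \<Rightarrow> (nat \<Rightarrow> nat \<Rightarrow> int) \<Rightarrow> (nat \<times> nat) set" where
  "the_cycle m n M = (THE C. is_cycle m n M C)"

definition pmm_signs ::
  "nat \<Rightarrow> nat \<Rightarrow> (nat \<Rightarrow> nat \<Rightarrow> int) \<Rightarrow> (nat \<Rightarrow> int) \<Rightarrow> (nat \<Rightarrow> int) \<Rightarrow> bool" where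
  "pmm_signs m n M c r \<longleftrightarrow>
     (\<forall>i\<in>{1..m}. c i \<in> {-1, 1}) \<and> (\<forall>j\<in>{1..n}. r j \<in> {-1, 1}) \<and>
     (\<forall>i\<in>{1..m}. \<forall>j\<in>{1..n}. M i j \<noteq> 0 \<longrightarrow> M i j = c i * r j)"

definition orient_arrow ::
  "nat \<Rightarrow> nat \<Rightarrow> (nat \<Rightarrow> int) \<Rightarrow> (nat \<Rightarrow> int) \<Rightarrow> (nat \<Rightarrow> nat) \<Rightarrow> (nat \<Rightarrow> nat) \<Rightarrow> (nat \<Rightarrow> nat)
     \<Rightarrow> nat \<Rightarrow> nat \<Rightarrow> bool" where
  "orient_arrow m n c r pi vv hh p q \<longleftrightarrow>
     (\<exists>i\<in>{1..m}. in_col vv i p \<and> in_col vv i q \<and> (if c i = 1 then p < q else q < p)) \<or>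
     (\<exists>j\<in>{1..n}. in_row pi hh j p \<and> in_row pi hh j q \<and> (if r j = 1 then pi p < pi q else pi q < pi p))"

(* gridded M-coil: ordering sigma (sigma k = k-th point v_k), labelling lab of the cycle cells *)
definition is_gridded_coil ::
  "nat \<Rightarrow> nat \<Rightarrow> (nat \<Rightarrow> nat \<Rightarrow> int) \<Rightarrow> (nat \<Rightarrow> int) \<Rightarrow> (nat \<Rightarrow> int) \<Rightarrow> nat \<Rightarrow> (nat \<Rightarrow> nat)
     \<Rightarrow> (nat \<Rightarrow> nat) \<Rightarrow> (nat \<Rightarrow> nat) \<Rightarrow> bool" where
  "is_gridded_coil m n M c r L pi vv hh \<longleftrightarrow>
     is_gridding m n M L pi vv hh \<and>
     (let C = the_cycle m n M; l = card C in
       L > l \<and>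
       (\<exists>sigma lab. bij_betw sigma {1..L} {1..L} \<and> bij_betw lab {1..l} C \<and>
          (\<forall>k\<in>{1..L}. in_cell pi vv hh (lab ((k - 1) mod l + 1)) (sigma k)) \<and>
          (\<forall>k. 1 < k \<and> k \<le> L \<longrightarrow> orient_arrow m n c r pi vv hh (sigma (k - 1)) (sigma k)) \<and>
          (\<forall>k. l + 1 < k \<and> k \<le> L \<longrightarrow> orient_arrow m n c r pi vv hh (sigma k) (sigma (k - l - 1))) \<and>
          orient_arrow m n c r pi vv hh (sigma (l + 1)) (sigma 1)))"

definition is_coil ::
  "nat \<Rightarrow> nat \<Rightarrow> (nat \<Rightarrow> nat \<Rightarrow> int) \<Rightarrow> (nat \<Rightarrow> int) \<Rightarrow> (nat \<Rightarrow> int) \<Rightarrow> nat \<Rightarrow> (nat \<Rightarrow> nat) \<Rightarrow> bool" where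
  "is_coil m n M c r L pi \<longleftrightarrow> is_perm L pi \<and> (\<exists>vv hh. is_gridded_coil m n M c r L pi vv hh)"

definition misplaced ::
  "nat \<Rightarrow> nat \<Rightarrow> (nat \<Rightarrow> nat \<Rightarrow> int) \<Rightarrow> nat \<Rightarrow> (nat \<Rightarrow> nat) \<Rightarrow> (nat \<Rightarrow> nat) \<Rightarrow> (nat \<Rightarrow> nat) \<Rightarrow> nat set" where
  "misplaced m n M L pi vv hh = {p\<in>{1..L}. \<not> (\<exists>ij\<in>the_cycle m n M. in_cell pi vv hh ij p)}"

end

theory Submission
  imports Defs
begin

text \<open>
  Fix the coil gridding of pi, with its ordering v_1, ..., v_L, let l be the length of the cycle
  of G_M, and take any second gridding. Chaining the arrows v_(i+l) -> v_(i-1) -> v_i along a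
  common line shows that v_(i+l) precedes v_i in both orientations of their common cycle cell, so
  every residue class v_i, v_(i+l), v_(i+2l), ... is a chain, monotone in both coordinates. Call
  i a break if v_i and v_(i+l) lie in different cells of the second gridding. Then a grid line
  separates them, and a grid line separates at most one step of each of the l chains, so there
  are at most (m + n) l breaks. Along 2l + 1 consecutive indices without a break, the cells of
  the second gridding repeat with period l, and consecutive ones are distinct and share
  alternately a column and a row: they trace a closed non-backtracking walk of length l in the
  unicyclic graph G_M, which can only run around its cycle. Hence every misplaced point lies
  within 2l positions of a break.
\<close>

section \<open>Residues and periodic sequences\<close>

lemma Suc_mod_neq_self: "t < k \<Longrightarrow> 2 \<le> k \<Longrightarrow> Suc t mod k \<noteq> t"
  by (cases "Suc t < k") (auto simp: mod_Suc)

lemma Suc_mod_inj: "Suc t mod k = Suc t' mod k \<Longrightarrow> t < k \<Longrightarrow> t' < k \<Longrightarrow> t = t'"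
  by (cases "Suc t < k"; cases "Suc t' < k") (auto simp: mod_Suc split: if_splits)

lemma Suc_mod_eq_iff:
  fixes a b l :: nat
  shows "Suc a mod l = Suc b mod l \<longleftrightarrow> a mod l = b mod l"
proof
  assume "Suc a mod l = Suc b mod l"
  then have "(Suc a + (l - 1)) mod l = (Suc b + (l - 1)) mod l"
    by (metis mod_add_left_eq)
  moreover have "Suc a + (l - 1) = a + l" "Suc b + (l - 1) = b + l" if "l \<noteq> 0"
    using that by simp_all
  ultimately show "a mod l = b mod l"
    using \<open>Suc a mod l = Suc b mod l\<close> by (cases "l = 0") simp_all
qed (metis mod_Suc_eq)

lemma even_odd_split: "{0..<2 * (k::nat)} = (\<lambda>s. 2 * s) ` {0..<k} \<union> (\<lambda>s. 2 * s + 1) ` {0..<k}"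
proof -
  have "u \<in> (\<lambda>s. 2 * s) ` {0..<k} \<union> (\<lambda>s. 2 * s + 1) ` {0..<k}" if "u < 2 * k" for u
  proof (cases "even u")
    case True
    then have "u = 2 * (u div 2)" "u div 2 < k"
      using that by auto
    then show ?thesis
      by (intro UnI1 image_eqI[of u _ "u div 2"]) auto
  next
    case False
    then have "u = 2 * (u div 2) + 1" "u div 2 < k"
      using that by auto
    then show ?thesis
      by (intro UnI2 image_eqI[of u _ "u div 2"]) auto
  qed
  then show ?thesis
    by (intro equalityI subsetI) auto
qed

lemma card_le_if_inj_mod:
  fixes l :: nat
  assumes "finite A" "0 < l" "inj_on (\<lambda>i. i mod l) A"
  shows "card A \<le> l"
proof -
  have "(\<lambda>i. i mod l) ` A \<subseteq> {..<l}"
    using assms(2) by auto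
  from card_inj_on_le[OF assms(3) this] show ?thesis
    by simp
qed

lemma periodic_mod:
  fixes y :: "nat \<Rightarrow> 'a" and d :: nat
  assumes per: "\<And>u. y (u + d) = y u"
  shows "y u = y (u mod d)"
proof -
  have "y (v + q * d) = y v" for v q
  proof (induction q)
    case (Suc q)
    have "y (v + Suc q * d) = y ((v + q * d) + d)"
      by (simp add: algebra_simps)
    then show ?case
      using per Suc.IH by simp
  qed simp
  from this[of "u mod d" "u div d"] show ?thesis
    by simp
qed

lemma periodic_cong_mod:
  fixes y :: "nat \<Rightarrow> 'a" and d :: nat
  shows "(\<And>u. y (u + d) = y u) \<Longrightarrow> u mod d = v mod d \<Longrightarrow> y u = y v"
  by (metis periodic_mod)

lemma periodic_range:
  fixes y :: "nat \<Rightarrow> 'a" and d :: nat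
  assumes "\<And>u. y (u + d) = y u" "0 < d"
  shows "range y = y ` {0..<d}"
proof -
  have "y u \<in> y ` {0..<d}" for u
    using periodic_mod[of y d u, OF assms(1)] assms(2)
    by (metis atLeastLessThan_iff imageI le0 mod_less_divisor)
  then show ?thesis
    by blast
qed

lemma periodic_inj_Suc_shift:
  fixes y :: "nat \<Rightarrow> 'a" and d :: nat
  assumes per: "\<And>u. y (u + d) = y u" and inj: "inj_on y {0..<d}"
  shows "inj_on (\<lambda>u. y (Suc u)) {0..<d}"
proof (rule inj_onI)
  fix a b assume ab: "a \<in> {0..<d}" "b \<in> {0..<d}" "y (Suc a) = y (Suc b)"
  then have "y (Suc a mod d) = y (Suc b mod d)"
    using periodic_mod[of y d, OF per] by metis
  moreover have "Suc a mod d \<in> {0..<d}" "Suc b mod d \<in> {0..<d}"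
    using ab(1) by simp_all
  ultimately have "Suc a mod d = Suc b mod d"
    by (rule inj_onD[OF inj])
  then show "a = b"
    using ab(1,2) by (auto intro: Suc_mod_inj)
qed

lemma shortest_repetition:
  fixes x :: "nat \<Rightarrow> 'a"
  assumes "x q = x (q + e)" "0 < e"
  obtains p d where "0 < d" "x (p + d) = x p" "inj_on (\<lambda>a. x (p + a)) {0..<d}"
proof -
  let ?rep = "\<lambda>d. 0 < d \<and> (\<exists>p. x p = x (p + d))"
  define d where "d = (LEAST d. ?rep d)"
  have "?rep d"
    unfolding d_def by (rule LeastI[of ?rep e]) (use assms in blast)
  then obtain p where p: "0 < d" "x (p + d) = x p"
    by metis
  have "inj_on (\<lambda>a. x (p + a)) {0..<d}"
  proof (rule inj_onI, rule ccontr)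
    fix a b assume ab: "a \<in> {0..<d}" "b \<in> {0..<d}" "x (p + a) = x (p + b)" "a \<noteq> b"
    have "?rep (max a b - min a b)"
      using ab by (intro conjI exI[of _ "p + min a b"]) (auto simp: max_def min_def)
    then have "d \<le> max a b - min a b"
      unfolding d_def by (rule Least_le)
    then show False
      using ab(1,2) by simp
  qed
  with p show thesis
    by (rule that)
qed

lemma repetition_Suc_mod:
  assumes "x (p + d) = x p"
  shows "x (p + Suc u mod d) = x (Suc (p + u mod d))"
proof (cases "Suc (u mod d) = d")
  case True
  then have "x (p + Suc u mod d) = x (p + d)"
    using assms by (simp add: mod_Suc)
  also have "p + d = Suc (p + u mod d)"
    using True by simp
  finally show ?thesis .
qed (simp add: mod_Suc)

section \<open>Closed walks in the row-column graph\<close>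

(* Vertices of G_M: Inl i is column i and Inr j is row j'. An edge is read off as its cell;
   two vertices of the same kind give the junk value (0, 0). *)
fun edge_cell :: "nat + nat \<Rightarrow> nat + nat \<Rightarrow> nat \<times> nat" where
  "edge_cell (Inl i) (Inr j) = (i, j)"
| "edge_cell (Inr j) (Inl i) = (i, j)"
| "edge_cell _ _ = (0, 0)"

definition grid_edge :: "nat \<Rightarrow> nat \<Rightarrow> (nat \<Rightarrow> nat \<Rightarrow> int) \<Rightarrow> nat \<times> nat \<Rightarrow> bool" where
  "grid_edge m n M e \<longleftrightarrow> e \<in> {1..m} \<times> {1..n} \<and> M (fst e) (snd e) \<noteq> 0"

abbreviation cycle_cells :: "nat \<Rightarrow> (nat \<Rightarrow> nat) \<Rightarrow> (nat \<Rightarrow> nat) \<Rightarrow> (nat \<times> nat) set" where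
  "cycle_cells k ic jc \<equiv> (\<lambda>t. (ic t, jc t)) ` {0..<k} \<union> (\<lambda>t. (ic (Suc t mod k), jc t)) ` {0..<k}"

lemma card_cycle_cells:
  assumes "inj_on ic {0..<k}" "inj_on jc {0..<k}" "k \<ge> 2"
  shows "card (cycle_cells k ic jc) = 2 * k"
proof -
  have "inj_on (\<lambda>t. (ic t, jc t)) {0..<k}" "inj_on (\<lambda>t. (ic (Suc t mod k), jc t)) {0..<k}"
    using assms(2) by (auto simp: inj_on_def)
  moreover have "(\<lambda>t. (ic t, jc t)) ` {0..<k} \<inter> (\<lambda>t. (ic (Suc t mod k), jc t)) ` {0..<k} = {}"
  proof (rule ccontr)
    assume "\<not> ?thesis"
    then obtain t t' where "t < k" "t' < k" "ic t = ic (Suc t' mod k)" "jc t = jc t'"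
      by auto
    then have t: "t < k" "ic t = ic (Suc t mod k)"
      using inj_onD[OF assms(2)] by auto
    have "Suc t mod k < k"
      using assms(3) by simp
    then have "t = Suc t mod k"
      using t inj_onD[OF assms(1)] by simp
    then show False
      using t(1) assms(3) Suc_mod_neq_self by metis
  qed
  ultimately show ?thesis
    by (simp add: card_Un_disjoint card_image)
qed

lemma is_cycleE:
  assumes "is_cycle m n M C"
  obtains k ic jc where "k \<ge> 2" "inj_on ic {0..<k}" "inj_on jc {0..<k}"
    "\<And>t. t < k \<Longrightarrow> grid_edge m n M (ic t, jc t)"
    "\<And>t. t < k \<Longrightarrow> grid_edge m n M (ic (Suc t mod k), jc t)"
    "C = cycle_cells k ic jc"
proof -
  obtain k ic jc where k: "k \<ge> 2" "inj_on ic {0..<k}" "inj_on jc {0..<k}"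
    "ic ` {0..<k} \<subseteq> {1..m}" "jc ` {0..<k} \<subseteq> {1..n}"
    "\<forall>t<k. M (ic t) (jc t) \<noteq> 0 \<and> M (ic (Suc t mod k)) (jc t) \<noteq> 0"
    "C = cycle_cells k ic jc"
    using assms unfolding is_cycle_def by blast
  show thesis
  proof (rule that[OF k(1-3) _ _ k(7)])
    fix t assume "t < k"
    moreover have "Suc t mod k < k"
      using k(1) by simp
    ultimately show "grid_edge m n M (ic t, jc t)" "grid_edge m n M (ic (Suc t mod k), jc t)"
      using k(4-6) by (auto simp: grid_edge_def image_subset_iff)
  qed
qed

lemma is_cycleI:
  assumes "k \<ge> 2" "inj_on ic {0..<k}" "inj_on jc {0..<k}"
    "\<And>t. t < k \<Longrightarrow> grid_edge m n M (ic t, jc t)"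
    "\<And>t. t < k \<Longrightarrow> grid_edge m n M (ic (Suc t mod k), jc t)"
  shows "is_cycle m n M (cycle_cells k ic jc)"
  unfolding is_cycle_def
proof (intro exI conjI)
  show "ic ` {0..<k} \<subseteq> {1..m}" "jc ` {0..<k} \<subseteq> {1..n}"
    "\<forall>t<k. M (ic t) (jc t) \<noteq> 0 \<and> M (ic (Suc t mod k)) (jc t) \<noteq> 0"
    using assms(4,5) by (auto simp: grid_edge_def)
qed (use assms(1-3) in simp_all)

lemma is_cycle_card: "is_cycle m n M C \<Longrightarrow> \<exists>k\<ge>2. card C = 2 * k"
  by (elim is_cycleE) (auto simp: card_cycle_cells)

lemma is_cycle_grid_edge: "is_cycle m n M C \<Longrightarrow> e \<in> C \<Longrightarrow> grid_edge m n M e"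
  by (elim is_cycleE) force

lemma is_cycle_union_of_matchings:
  assumes "is_cycle m n M C"
  obtains A B where "C = A \<union> B" "inj_on fst A" "inj_on snd A" "inj_on fst B" "inj_on snd B"
proof -
  obtain k ic jc where k: "k \<ge> 2" "inj_on ic {0..<k}" "inj_on jc {0..<k}"
    and C: "C = cycle_cells k ic jc"
    using assms unfolding is_cycle_def by blast
  have "inj_on (\<lambda>t. ic (Suc t mod k)) {0..<k}"
  proof (rule inj_onI)
    fix t t' assume t: "t \<in> {0..<k}" "t' \<in> {0..<k}" "ic (Suc t mod k) = ic (Suc t' mod k)"
    have "Suc t mod k < k" "Suc t' mod k < k"
      using t(1) by simp_all
    then have "Suc t mod k = Suc t' mod k"
      by (intro inj_onD[OF k(2) t(3)]) simp_all
    then show "t = t'"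
      using t(1,2) by (auto intro: Suc_mod_inj)
  qed
  then have "inj_on fst ((\<lambda>t. (ic (Suc t mod k), jc t)) ` {0..<k})"
    by (intro inj_on_imageI) (simp add: comp_def)
  moreover have "inj_on fst ((\<lambda>t. (ic t, jc t)) ` {0..<k})"
    "inj_on snd ((\<lambda>t. (ic t, jc t)) ` {0..<k})"
    "inj_on snd ((\<lambda>t. (ic (Suc t mod k), jc t)) ` {0..<k})"
    using k(2,3) by (auto intro!: inj_on_imageI simp: comp_def)
  ultimately show thesis
    using that[OF C] by blast
qed

lemma no_three_equal_values:
  assumes "inj_on f A" "inj_on f B" "P \<in> A \<union> B" "Q \<in> A \<union> B" "R \<in> A \<union> B"
    "P \<noteq> Q" "Q \<noteq> R" "P \<noteq> R" "f P = f Q" "f Q = f R"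
  shows False
  using assms(3-) inj_onD[OF assms(1)] inj_onD[OF assms(2)] by auto

lemma is_cycle_no_three_in_col:
  assumes "is_cycle m n M C" "P \<in> C" "Q \<in> C" "R \<in> C"
    "P \<noteq> Q" "Q \<noteq> R" "P \<noteq> R" "fst P = fst Q" "fst Q = fst R"
  shows False
  using assms(1)
proof (rule is_cycle_union_of_matchings)
  fix A B assume "C = A \<union> B" "inj_on fst A" "inj_on fst B"
  then show False
    using no_three_equal_values[of fst A B P Q R] assms(2-) by blast
qed

lemma is_cycle_no_three_in_row:
  assumes "is_cycle m n M C" "P \<in> C" "Q \<in> C" "R \<in> C"
    "P \<noteq> Q" "Q \<noteq> R" "P \<noteq> R" "snd P = snd Q" "snd Q = snd R"
  shows False
  using assms(1)
proof (rule is_cycle_union_of_matchings)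
  fix A B assume "C = A \<union> B" "inj_on snd A" "inj_on snd B"
  then show False
    using no_three_equal_values[of snd A B P Q R] assms(2-) by blast
qed

definition walk_edges :: "(nat \<Rightarrow> nat + nat) \<Rightarrow> (nat \<times> nat) set" where
  "walk_edges y = range (\<lambda>u. edge_cell (y u) (y (Suc u)))"

lemma alternating_parity:
  fixes y :: "nat \<Rightarrow> 'a + 'b" and p j :: nat
  assumes "\<And>u. isl (y (Suc u)) \<longleftrightarrow> \<not> isl (y u)"
  shows "isl (y (p + j)) \<longleftrightarrow> (isl (y p) \<longleftrightarrow> even j)"
  by (induction j) (use assms in auto)

lemma walk_edges_by_parity:
  assumes "\<And>u. y (u + 2 * k) = y u" "0 < k"
  shows "walk_edges y = (\<lambda>s. edge_cell (y (2 * s)) (y (2 * s + 1))) ` {0..<k} \<union>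
    (\<lambda>s. edge_cell (y (2 * s + 1)) (y (2 * s + 2))) ` {0..<k}"
proof -
  have "y (Suc (u + 2 * k)) = y (Suc u)" for u
    using assms(1)[of "Suc u"] by simp
  then have "walk_edges y = (\<lambda>u. edge_cell (y u) (y (Suc u))) ` {0..<2 * k}"
    unfolding walk_edges_def using assms by (intro periodic_range) simp_all
  then show ?thesis
    unfolding even_odd_split image_Un image_image by simp
qed

lemma alternating_walk_from_column_is_cycle:
  assumes per: "\<And>u. y (u + 2 * k) = y u" and inj: "inj_on y {0..<2 * k}" and "k \<ge> 2"
    and alt: "\<And>u. isl (y (Suc u)) \<longleftrightarrow> \<not> isl (y u)" and "isl (y 0)"
    and edge: "\<And>u. grid_edge m n M (edge_cell (y u) (y (Suc u)))"
  shows "is_cycle m n M (walk_edges y) \<and> card (walk_edges y) = 2 * k"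
proof -
  define ic where "ic s = projl (y (2 * s))" for s
  define jc where "jc s = projr (y (2 * s + 1))" for s
  have isl_y: "isl (y u) \<longleftrightarrow> even u" for u
    using alternating_parity[of y 0 u, OF alt] \<open>isl (y 0)\<close> by simp
  have y_even: "y (2 * s) = Inl (ic s)" for s
    using isl_y[of "2 * s"] by (cases "y (2 * s)") (auto simp: ic_def)
  have y_odd: "y (2 * s + 1) = Inr (jc s)" for s
    using isl_y[of "2 * s + 1"] by (cases "y (2 * s + 1)") (auto simp: jc_def)
  have y_wrap: "y (2 * s + 2) = Inl (ic (Suc s mod k))" if "s < k" for s
  proof (cases "Suc s < k")
    case False
    then have "Suc s = k"
      using that by simp
    then have "2 * s + 2 = 0 + 2 * k"
      by simp
    then have "y (2 * s + 2) = y (0 + 2 * k)"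
      by (rule arg_cong)
    also have "\<dots> = Inl (ic 0)"
      using per[of 0] y_even[of 0] by simp
    finally show ?thesis
      using \<open>Suc s = k\<close> by simp
  qed (use y_even[of "Suc s"] in simp)
  have inj_ic: "inj_on ic {0..<k}"
  proof (rule inj_onI)
    fix a b assume "a \<in> {0..<k}" "b \<in> {0..<k}" "ic a = ic b"
    then show "a = b"
      using inj_onD[OF inj, of "2 * a" "2 * b"] y_even by simp
  qed
  have inj_jc: "inj_on jc {0..<k}"
  proof (rule inj_onI)
    fix a b assume "a \<in> {0..<k}" "b \<in> {0..<k}" "jc a = jc b"
    then show "a = b"
      using inj_onD[OF inj, of "2 * a + 1" "2 * b + 1"] y_odd by simp
  qed
  have "grid_edge m n M (ic t, jc t)" "grid_edge m n M (ic (Suc t mod k), jc t)" if "t < k" for t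
    using edge[of "2 * t"] edge[of "2 * t + 1"] y_even y_odd y_wrap[OF that] by simp_all
  then have "is_cycle m n M (cycle_cells k ic jc)"
    by (rule is_cycleI[OF \<open>k \<ge> 2\<close> inj_ic inj_jc])
  moreover have "walk_edges y = cycle_cells k ic jc"
    using \<open>k \<ge> 2\<close> y_even y_odd y_wrap by (simp add: walk_edges_by_parity[of y k, OF per])
  ultimately show ?thesis
    using card_cycle_cells[OF inj_ic inj_jc \<open>k \<ge> 2\<close>] by simp
qed

lemma walk_edges_shift:
  assumes per: "\<And>u. x (u + N) = x u" and "0 < N"
  shows "walk_edges (\<lambda>u. x (p + u)) = walk_edges x"
proof -
  define w where "w u = edge_cell (x u) (x (Suc u))" for u
  have w_per: "w (u + N) = w u" for u
    using per[of u] per[of "Suc u"] by (simp add: w_def)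
  have "w (p + (u + N * p - p)) = w u" for u
  proof -
    have "p \<le> N * p"
      using \<open>0 < N\<close> by simp
    then have "p + (u + N * p - p) = u + N * p"
      by linarith
    then have "(p + (u + N * p - p)) mod N = u mod N"
      by simp
    then show ?thesis
      by (rule periodic_cong_mod[of w N, OF w_per])
  qed
  then have "range (\<lambda>u. w (p + u)) = range w"
    by (auto intro: range_eqI) (metis rangeI)
  then show ?thesis
    unfolding walk_edges_def w_def by simp
qed

lemma alternating_walk_is_cycle:
  assumes per: "\<And>u. y (u + 2 * k) = y u" and inj: "inj_on y {0..<2 * k}" and "k \<ge> 2"
    and alt: "\<And>u. isl (y (Suc u)) \<longleftrightarrow> \<not> isl (y u)"
    and edge: "\<And>u. grid_edge m n M (edge_cell (y u) (y (Suc u)))"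
  shows "is_cycle m n M (walk_edges y) \<and> card (walk_edges y) = 2 * k"
proof (cases "isl (y 0)")
  case True
  then show ?thesis
    using alternating_walk_from_column_is_cycle assms by blast
next
  case False
  have "walk_edges (\<lambda>u. y (Suc u)) = walk_edges y"
    using walk_edges_shift[of y "2 * k" 1, OF per] \<open>k \<ge> 2\<close> by simp
  moreover have "y (Suc u + 2 * k) = y (Suc u)" for u
    by (rule per)
  then have "is_cycle m n M (walk_edges (\<lambda>u. y (Suc u))) \<and>
      card (walk_edges (\<lambda>u. y (Suc u))) = 2 * k"
    using periodic_inj_Suc_shift[OF per inj] \<open>k \<ge> 2\<close> alt False edge
    by (intro alternating_walk_from_column_is_cycle) simp_all
  ultimately show ?thesis
    by simp
qed

(* The shortest repetition of the walk is a cycle of G_M (not of length 2, as the walk does not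
   backtrack), hence it is C, and the walk of period card C just runs around it. *)
lemma closed_walk_in_unique_cycle:
  assumes uc: "unicyclic m n M" and cyc: "is_cycle m n M C"
    and per: "\<And>u. x (u + card C) = x u"
    and alt: "\<And>u. isl (x (Suc u)) \<longleftrightarrow> \<not> isl (x u)"
    and no_backtrack: "\<And>u. x (Suc (Suc u)) \<noteq> x u"
    and edge: "\<And>u. grid_edge m n M (edge_cell (x u) (x (Suc u)))"
  shows "walk_edges x \<subseteq> C"
proof -
  let ?N = "card C"
  have "?N \<ge> 4"
    using is_cycle_card[OF cyc] by auto
  obtain p d where d: "0 < d" "x (p + d) = x p" and inj: "inj_on (\<lambda>a. x (p + a)) {0..<d}"
    by (rule shortest_repetition[of x 0 ?N]) (use per[of 0] \<open>?N \<ge> 4\<close> in auto)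
  have "even d"
    using alternating_parity[of x p d, OF alt] d(2) by (cases "isl (x p)") simp_all
  moreover have "d \<noteq> 2"
    using no_backtrack[of p] d(2) by (auto simp: numeral_2_eq_2)
  ultimately obtain k where k: "d = 2 * k" "k \<ge> 2"
    using d(1) by (auto elim!: evenE)
  define y where "y u = x (p + u mod d)" for u
  have "inj_on y {0..<d}"
    unfolding y_def using inj by (rule inj_on_cong[THEN iffD1, rotated]) simp
  moreover have "y (u + d) = y u" for u
    by (simp add: y_def)
  moreover have "isl (y (Suc u)) \<longleftrightarrow> \<not> isl (y u)" for u
    using alt repetition_Suc_mod[OF d(2)] by (simp add: y_def)
  moreover have "grid_edge m n M (edge_cell (y u) (y (Suc u)))" for u
    using edge repetition_Suc_mod[OF d(2)] by (simp add: y_def)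
  ultimately have "is_cycle m n M (walk_edges y) \<and> card (walk_edges y) = d"
    using alternating_walk_is_cycle[of y k m n M] k by simp
  then have "walk_edges y = C" "d = ?N"
    using uc cyc unfolding unicyclic_def by blast+
  moreover have "y = (\<lambda>u. x (p + u))"
  proof
    fix u
    have "(p + u mod ?N) mod ?N = (p + u) mod ?N"
      by (simp add: mod_add_right_eq)
    then show "y u = x (p + u)"
      unfolding y_def \<open>d = ?N\<close> by (rule periodic_cong_mod[of x ?N, OF per])
  qed
  ultimately show ?thesis
    using walk_edges_shift[of x ?N p, OF per] \<open>?N \<ge> 4\<close> by simp
qed

(* Consecutive cells of E share a column or a row, alternately; recording the shared lines gives
   a closed walk of G_M whose edges are the cells of E. *)
lemma turning_cell_sequence_in_cycle:
  assumes uc: "unicyclic m n M" and cyc: "is_cycle m n M C"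
    and per: "\<And>u. E (u + card C) = E u" "\<And>u. col_turn (u + card C) = col_turn u"
    and step: "\<And>u. E (Suc u) \<noteq> E u"
    and turn: "\<And>u. if col_turn u then fst (E (Suc u)) = fst (E u) else snd (E (Suc u)) = snd (E u)"
    and alt: "\<And>u. col_turn (Suc u) \<longleftrightarrow> \<not> col_turn u"
    and edge: "\<And>u. grid_edge m n M (E u)"
  shows "E u \<in> C"
proof -
  define x where "x u = (if col_turn u then Inl (fst (E u)) else Inr (snd (E u)))" for u
  have x_edge: "edge_cell (x u) (x (Suc u)) = E (Suc u)" for u
    using turn[of u] alt[of u] by (cases "col_turn u") (auto simp: x_def prod_eq_iff)
  have "x (Suc (Suc u)) \<noteq> x u" for u
  proof
    assume x_eq: "x (Suc (Suc u)) = x u"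
    have "fst (E (Suc (Suc u))) = fst (E (Suc u)) \<and> snd (E (Suc (Suc u))) = snd (E (Suc u))"
      using x_eq turn[of u] turn[of "Suc u"] alt[of u] alt[of "Suc u"]
      by (cases "col_turn u") (auto simp: x_def)
    then show False
      using step[of "Suc u"] by (simp add: prod_eq_iff)
  qed
  moreover have "x (u + card C) = x u" "isl (x (Suc u)) \<longleftrightarrow> \<not> isl (x u)" for u
    using per alt by (simp_all add: x_def)
  ultimately have "walk_edges x \<subseteq> C"
    using edge x_edge by (intro closed_walk_in_unique_cycle[OF uc cyc]) simp_all
  moreover have "card C \<ge> 1"
    using is_cycle_card[OF cyc] by auto
  then have "E u = E (Suc (u + card C - 1))"
    using per(1)[of u] by simp
  ultimately show ?thesis
    using x_edge unfolding walk_edges_def by (metis rangeI subsetD)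
qed

section \<open>Grid lines and cells\<close>

definition grid_lines :: "nat \<Rightarrow> nat \<Rightarrow> (nat \<Rightarrow> nat) \<Rightarrow> bool" where
  "grid_lines K L g \<longleftrightarrow> g 0 = 0 \<and> g K = L \<and> (\<forall>i<K. g i \<le> g (Suc i))"

lemma is_gridding_grid_lines:
  assumes "is_gridding m n M L pi vv hh"
  shows "grid_lines m L vv" "grid_lines n L hh"
  using assms unfolding is_gridding_def grid_lines_def by auto

lemma grid_lines_mono:
  assumes "grid_lines K L g" "i \<le> j" "j \<le> K"
  shows "g i \<le> g j"
proof -
  have "g (min u K) \<le> g (min (Suc u) K)" for u
    using assms(1) unfolding grid_lines_def by (cases "u < K") (simp_all add: min_def)
  then show ?thesis
    using lift_Suc_mono_le[of "\<lambda>u. g (min u K)" i j] assms(2,3) by simp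
qed

definition grid_index :: "(nat \<Rightarrow> nat) \<Rightarrow> nat \<Rightarrow> nat" where
  "grid_index g x = (LEAST i. x \<le> g i)"

lemma grid_index_bounds:
  assumes "grid_lines K L g" "x \<in> {1..L}"
  shows "grid_index g x \<in> {1..K}" "g (grid_index g x - 1) < x" "x \<le> g (grid_index g x)"
proof -
  have "x \<le> g K"
    using assms unfolding grid_lines_def by simp
  then have le: "grid_index g x \<le> K" and x_le: "x \<le> g (grid_index g x)"
    unfolding grid_index_def by (auto intro: Least_le LeastI)
  moreover have "grid_index g x \<noteq> 0"
  proof
    assume "grid_index g x = 0"
    then show False
      using x_le assms unfolding grid_lines_def by simp
  qed
  moreover have "\<not> x \<le> g (grid_index g x - 1)"
    using not_less_Least[of "grid_index g x - 1" "\<lambda>i. x \<le> g i"] \<open>grid_index g x \<noteq> 0\<close>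
    unfolding grid_index_def by simp
  ultimately show "grid_index g x \<in> {1..K}" "g (grid_index g x - 1) < x" "x \<le> g (grid_index g x)"
    by simp_all
qed

lemma grid_index_eqI:
  assumes "grid_lines K L g" "i \<in> {1..K}" "g (i - 1) < x" "x \<le> g i"
  shows "grid_index g x = i"
  unfolding grid_index_def
proof (rule Least_equality)
  show "x \<le> g i" by fact
next
  fix j assume "x \<le> g j"
  show "i \<le> j"
  proof (rule ccontr)
    assume "\<not> i \<le> j"
    then have "g j \<le> g (i - 1)"
      using assms(2) by (intro grid_lines_mono[OF assms(1)]) auto
    then show False
      using \<open>x \<le> g j\<close> assms(3) by simp
  qed
qed

lemma grid_index_mono:
  assumes "x \<le> y" "y \<le> g K"
  shows "grid_index g x \<le> grid_index g y"
proof -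
  have "y \<le> g (grid_index g y)"
    unfolding grid_index_def by (rule LeastI[of _ K]) (rule assms(2))
  then show ?thesis
    using assms(1) unfolding grid_index_def by (intro Least_le) simp
qed

definition between :: "nat \<Rightarrow> nat \<Rightarrow> nat \<Rightarrow> bool" where
  "between a b c \<longleftrightarrow> a < b \<and> b < c \<or> c < b \<and> b < a"

lemma grid_index_between:
  assumes "grid_lines K L g" "between a b c" "a \<le> L" "c \<le> L" "grid_index g a = grid_index g c"
  shows "grid_index g b = grid_index g a"
proof -
  have "g K = L"
    using assms(1) unfolding grid_lines_def by simp
  then show ?thesis
    using assms(2-) grid_index_mono[of a b g K] grid_index_mono[of b c g K]
      grid_index_mono[of c b g K] grid_index_mono[of b a g K]
    unfolding between_def by (auto simp del: One_nat_def)
qed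

(* The grid line at t + 1/2, encoded by t as in is_gridding, lies between a and b. *)
definition separates :: "nat \<Rightarrow> nat \<Rightarrow> nat \<Rightarrow> bool" where
  "separates t a b \<longleftrightarrow> a \<le> t \<and> t < b \<or> b \<le> t \<and> t < a"

lemma grid_index_neq_separates:
  assumes "grid_lines K L g" "a \<in> {1..L}" "b \<in> {1..L}" "grid_index g a \<noteq> grid_index g b"
  shows "\<exists>s\<in>{1..K}. separates (g s) a b"
proof -
  have sep: "separates (g (grid_index g x)) x y \<and> grid_index g x \<in> {1..K}"
    if "x \<in> {1..L}" "y \<in> {1..L}" "grid_index g x < grid_index g y" for x y
  proof -
    note x = grid_index_bounds[OF assms(1) that(1)] and y = grid_index_bounds[OF assms(1) that(2)]
    have "g (grid_index g x) \<le> g (grid_index g y - 1)"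
      using that(3) y(1) by (intro grid_lines_mono[OF assms(1)]) auto
    then show ?thesis
      using x y unfolding separates_def by simp
  qed
  show ?thesis
  proof (cases "grid_index g a < grid_index g b")
    case True
    then show ?thesis
      using sep[of a b] assms(2,3) by blast
  next
    case False
    then show ?thesis
      using sep[of b a] assms by (auto simp: separates_def)
  qed
qed

definition grid_cell :: "(nat \<Rightarrow> nat) \<Rightarrow> (nat \<Rightarrow> nat) \<Rightarrow> (nat \<Rightarrow> nat) \<Rightarrow> nat \<Rightarrow> nat \<times> nat" where
  "grid_cell pi vv hh p = (grid_index vv p, grid_index hh (pi p))"

lemma grid_cell_in_cell:
  assumes "is_gridding m n M L pi vv hh" "p \<in> {1..L}" "pi p \<in> {1..L}"
  shows "grid_cell pi vv hh p \<in> {1..m} \<times> {1..n}" "in_cell pi vv hh (grid_cell pi vv hh p) p"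
  using grid_index_bounds[OF is_gridding_grid_lines(1)[OF assms(1)] assms(2)]
    grid_index_bounds[OF is_gridding_grid_lines(2)[OF assms(1)] assms(3)]
  unfolding grid_cell_def in_cell_def in_col_def in_row_def by simp_all

lemma grid_cell_col:
  assumes "is_gridding m n M L pi vv hh" "i \<in> {1..m}" "in_col vv i p"
  shows "fst (grid_cell pi vv hh p) = i"
  using grid_index_eqI[OF is_gridding_grid_lines(1)[OF assms(1)] assms(2)] assms(3)
  unfolding grid_cell_def in_col_def by simp

lemma grid_cell_row:
  assumes "is_gridding m n M L pi vv hh" "j \<in> {1..n}" "in_row pi hh j p"
  shows "snd (grid_cell pi vv hh p) = j"
  using grid_index_eqI[OF is_gridding_grid_lines(2)[OF assms(1)] assms(2)] assms(3)
  unfolding grid_cell_def in_row_def by simp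

lemma grid_cell_eqI:
  assumes "is_gridding m n M L pi vv hh" "P \<in> {1..m} \<times> {1..n}" "in_cell pi vv hh P p"
  shows "grid_cell pi vv hh p = P"
  using grid_cell_col[OF assms(1), of "fst P" p] grid_cell_row[OF assms(1), of "snd P" p] assms(2,3)
  unfolding in_cell_def by (simp add: prod_eq_iff mem_Times_iff)

lemma grid_cell_grid_edge:
  assumes "is_gridding m n M L pi vv hh" "p \<in> {1..L}" "pi p \<in> {1..L}"
  shows "grid_edge m n M (grid_cell pi vv hh p)"
proof -
  obtain i j where ij: "grid_cell pi vv hh p = (i, j)"
    by fastforce
  then have "(i, j) \<in> {1..m} \<times> {1..n}" "in_cell pi vv hh (i, j) p"
    using grid_cell_in_cell[OF assms] by simp_all
  moreover from this have "M i j \<noteq> 0"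
    using assms unfolding is_gridding_def by blast
  ultimately show ?thesis
    unfolding grid_edge_def ij by simp
qed

lemma grid_cell_monotone:
  assumes "is_gridding m n M L pi vv hh" "is_perm L pi" "p \<in> {1..L}" "q \<in> {1..L}" "p < q"
    and same: "grid_cell pi vv hh p = grid_cell pi vv hh q"
  defines "s \<equiv> M (fst (grid_cell pi vv hh p)) (snd (grid_cell pi vv hh p))"
  shows "s = 1 \<Longrightarrow> pi p < pi q" and "s = -1 \<Longrightarrow> pi q < pi p"
proof -
  have pi_range: "pi p \<in> {1..L}" "pi q \<in> {1..L}"
    using assms(2-4) bij_betwE unfolding is_perm_def by blast+
  obtain i j where ij: "grid_cell pi vv hh p = (i, j)"
    by fastforce
  then have "(i, j) \<in> {1..m} \<times> {1..n}" "in_cell pi vv hh (i, j) p" "in_cell pi vv hh (i, j) q"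
    using grid_cell_in_cell[OF assms(1) assms(3) pi_range(1)]
      grid_cell_in_cell[OF assms(1) assms(4) pi_range(2)] same
    by simp_all
  then show "s = 1 \<Longrightarrow> pi p < pi q" and "s = -1 \<Longrightarrow> pi q < pi p"
    using assms(1,3,4,5) unfolding is_gridding_def s_def ij by auto
qed

lemma gridding_between_iff:
  assumes "gridding_matrix m n M" "is_gridding m n M L pi vv hh" "is_perm L pi"
    and pts: "a \<in> {1..L}" "b \<in> {1..L}" "d \<in> {1..L}" "distinct [a, b, d]"
    and same: "grid_cell pi vv hh a = grid_cell pi vv hh b" "grid_cell pi vv hh b = grid_cell pi vv hh d"
  shows "between a b d \<longleftrightarrow> between (pi a) (pi b) (pi d)"
proof -
  obtain X where X: "grid_cell pi vv hh a = X" "grid_cell pi vv hh b = X" "grid_cell pi vv hh d = X"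
    using same by simp
  have "pi a \<in> {1..L}"
    using assms(3) pts(1) bij_betwE unfolding is_perm_def by blast
  then have "grid_edge m n M X"
    using grid_cell_grid_edge[OF assms(2) pts(1)] X(1) by simp
  then have "M (fst X) (snd X) = 1 \<or> M (fst X) (snd X) = -1"
    using assms(1) unfolding gridding_matrix_def grid_edge_def by fastforce
  moreover have "x < y \<Longrightarrow> M (fst X) (snd X) = 1 \<Longrightarrow> pi x < pi y"
    "x < y \<Longrightarrow> M (fst X) (snd X) = -1 \<Longrightarrow> pi y < pi x"
    if "x \<in> {a, b, d}" "y \<in> {a, b, d}" for x y
    using that pts(1-3) X grid_cell_monotone[OF assms(2,3), of x y] by auto
  ultimately consider
      "\<And>x y. x \<in> {a, b, d} \<Longrightarrow> y \<in> {a, b, d} \<Longrightarrow> x \<noteq> y \<Longrightarrow> x < y \<longleftrightarrow> pi x < pi y"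
    | "\<And>x y. x \<in> {a, b, d} \<Longrightarrow> y \<in> {a, b, d} \<Longrightarrow> x \<noteq> y \<Longrightarrow> x < y \<longleftrightarrow> pi y < pi x"
    by (metis less_asym linorder_neqE_nat)
  then show ?thesis
  proof cases
    case 1
    then show ?thesis
      using 1[of a b] 1[of b d] 1[of d b] 1[of b a] pts(4) unfolding between_def by auto
  next
    case 2
    then show ?thesis
      using 2[of a b] 2[of b d] 2[of d b] 2[of b a] pts(4) unfolding between_def by auto
  qed
qed

section \<open>Orientations\<close>

definition precedes :: "bool \<Rightarrow> nat \<Rightarrow> nat \<Rightarrow> bool" where
  "precedes up a b \<longleftrightarrow> (if up then a < b else b < a)"

lemma precedes_trans: "precedes up a b \<Longrightarrow> precedes up b d \<Longrightarrow> precedes up a d"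
  unfolding precedes_def by (auto split: if_splits)

lemma precedes_between: "precedes up a b \<Longrightarrow> precedes up b d \<Longrightarrow> between a b d"
  unfolding precedes_def between_def by (auto split: if_splits)

lemma separates_at_most_once:
  assumes "precedes up b a" "precedes up b' a'" "a' = b \<or> precedes up a' b"
    "separates t a b" "separates t a' b'"
  shows False
  using assms unfolding precedes_def separates_def by (auto split: if_splits)

lemma orient_arrow_cases:
  assumes "is_gridding m n M L pi vv hh" "orient_arrow m n c r pi vv hh p q"
  defines "P \<equiv> grid_cell pi vv hh p" and "Q \<equiv> grid_cell pi vv hh q"
  shows "fst P = fst Q \<and> precedes (c (fst P) = 1) p q \<or>
    snd P = snd Q \<and> precedes (r (snd P) = 1) (pi p) (pi q)"
  using assms(2) grid_cell_col[OF assms(1)] grid_cell_row[OF assms(1)]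
  unfolding orient_arrow_def precedes_def P_def Q_def by metis

lemma cycle_cell_orders_agree:
  assumes "pmm_signs m n M c r" "is_gridding m n M L pi vv hh" "is_perm L pi"
    and pts: "p \<in> {1..L}" "q \<in> {1..L}" "p \<noteq> q"
    and same: "grid_cell pi vv hh p = P" "grid_cell pi vv hh q = P" and "grid_edge m n M P"
  shows "precedes (c (fst P) = 1) p q \<longleftrightarrow> precedes (r (snd P) = 1) (pi p) (pi q)"
proof -
  have "c (fst P) \<in> {-1, 1}" "r (snd P) \<in> {-1, 1}" "M (fst P) (snd P) = c (fst P) * r (snd P)"
    using assms(1) \<open>grid_edge m n M P\<close> unfolding pmm_signs_def grid_edge_def by auto
  moreover have "pi p \<noteq> pi q"
    using assms(3) pts inj_onD unfolding is_perm_def bij_betw_def by metis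
  moreover have "p < q \<Longrightarrow> M (fst P) (snd P) = 1 \<Longrightarrow> pi p < pi q"
    "p < q \<Longrightarrow> M (fst P) (snd P) = -1 \<Longrightarrow> pi q < pi p"
    "q < p \<Longrightarrow> M (fst P) (snd P) = 1 \<Longrightarrow> pi q < pi p"
    "q < p \<Longrightarrow> M (fst P) (snd P) = -1 \<Longrightarrow> pi p < pi q"
    using grid_cell_monotone[OF assms(2,3), of p q] grid_cell_monotone[OF assms(2,3), of q p] pts same
    by simp_all
  ultimately show ?thesis
    using pts(3) unfolding precedes_def by (cases "p < q") auto
qed

(* The steps from f i to f (i + l), f (i + l) to f (i + 2 * l), ... within a residue class all run
   in the same direction, so they cover disjoint intervals and t separates at most one of them. *)
lemma card_separated_laps_le:
  fixes f :: "nat \<Rightarrow> nat" and up :: "nat \<Rightarrow> bool" and l :: nat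
  assumes "0 < l"
    and up: "\<And>i i'. 1 \<le> i \<Longrightarrow> 1 \<le> i' \<Longrightarrow> i mod l = i' mod l \<Longrightarrow> up i = up i'"
    and laps: "\<And>i j. 1 \<le> i \<Longrightarrow> 1 \<le> j \<Longrightarrow> i + j * l \<le> L \<Longrightarrow> precedes (up i) (f (i + j * l)) (f i)"
  shows "card {i \<in> {1..L}. i + l \<le> L \<and> separates t (f i) (f (i + l))} \<le> l"
proof (rule card_le_if_inj_mod)
  let ?S = "{i \<in> {1..L}. i + l \<le> L \<and> separates t (f i) (f (i + l))}"
  have False if hyps: "i \<in> ?S" "i' \<in> ?S" "i mod l = i' mod l" "i < i'" for i i'
  proof -
    obtain j where j: "i' = i + l * j"
      using mod_eq_nat2E[OF hyps(3)] hyps(4) by auto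
    then have "j \<ge> 1"
      using hyps(4) by (cases j) auto
    have i: "1 \<le> i" "1 \<le> i'" "i' + l \<le> L" "up i' = up i"
      using hyps up[of i i'] by auto
    have "f i' = f (i + l) \<or> precedes (up i) (f i') (f (i + l))"
    proof (cases "j = 1")
      case False
      then have "i' = (i + l) + (j - 1) * l" "1 \<le> j - 1"
        using j \<open>j \<ge> 1\<close> by (auto simp: algebra_simps)
      moreover have "up (i + l) = up i"
        using up[of "i + l" i] i(1) by simp
      ultimately show ?thesis
        using laps[of "i + l" "j - 1"] i(1,3) by simp
    qed (use j in simp)
    moreover have "precedes (up i) (f (i + l)) (f i)" "precedes (up i) (f (i' + l)) (f i')"
      using laps[of i 1] laps[of i' 1] i j by auto
    ultimately show False
      using separates_at_most_once hyps(1,2) by blast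
  qed
  then show "inj_on (\<lambda>i. i mod l) ?S"
    by (metis (no_types, lifting) inj_onI linorder_neqE_nat)
qed (use assms(1) in simp_all)

section \<open>A coil seen through a second gridding\<close>

(* The gridding (vo, ho) with ordering v and labelling lab witnesses that pi is a coil; (vv, hh) is
   an arbitrary second gridding, in which misplaced points are counted. *)
locale coil_regridding =
  fixes m n :: nat and M :: "nat \<Rightarrow> nat \<Rightarrow> int" and c r :: "nat \<Rightarrow> int"
    and L :: nat and pi :: "nat \<Rightarrow> nat" and vo ho :: "nat \<Rightarrow> nat"
    and v :: "nat \<Rightarrow> nat" and lab :: "nat \<Rightarrow> nat \<times> nat"
    and vv hh :: "nat \<Rightarrow> nat" and C :: "(nat \<times> nat) set" and l :: nat
  assumes gridding_matrix: "gridding_matrix m n M" and unicyclic: "unicyclic m n M"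
    and signs: "pmm_signs m n M c r" and perm: "is_perm L pi"
    and coil_gridding: "is_gridding m n M L pi vo ho"
    and new_gridding: "is_gridding m n M L pi vv hh"
    and cycle: "C = the_cycle m n M" and period: "l = card C"
    and v_bij: "bij_betw v {1..L} {1..L}" and lab_bij: "bij_betw lab {1..l} C"
    and coil_cells: "\<forall>k\<in>{1..L}. in_cell pi vo ho (lab ((k - 1) mod l + 1)) (v k)"
    and coil_step: "\<forall>k. 1 < k \<and> k \<le> L \<longrightarrow> orient_arrow m n c r pi vo ho (v (k - 1)) (v k)"
    and coil_back: "\<forall>k. l + 1 < k \<and> k \<le> L \<longrightarrow> orient_arrow m n c r pi vo ho (v k) (v (k - l - 1))"
    and coil_close: "orient_arrow m n c r pi vo ho (v (l + 1)) (v 1)"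
begin

abbreviation coil_cell :: "nat \<Rightarrow> nat \<times> nat" where
  "coil_cell \<equiv> grid_cell pi vo ho"

abbreviation new_cell :: "nat \<Rightarrow> nat \<times> nat" where
  "new_cell \<equiv> grid_cell pi vv hh"

definition label :: "nat \<Rightarrow> nat \<times> nat" where
  "label k = lab ((k - 1) mod l + 1)"

lemma is_cycle_C: "is_cycle m n M C"
  using unicyclic unfolding unicyclic_def cycle the_cycle_def by (rule theI')

lemma period_ge_4: "l \<ge> 4"
  using is_cycle_card[OF is_cycle_C] period by auto

lemma v_in_range: "k \<in> {1..L} \<Longrightarrow> v k \<in> {1..L}"
  using bij_betwE[OF v_bij] by blast

lemma pi_in_range: "p \<in> {1..L} \<Longrightarrow> pi p \<in> {1..L}"
  using bij_betwE perm unfolding is_perm_def by blast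

lemma v_eq_iff: "k \<in> {1..L} \<Longrightarrow> k' \<in> {1..L} \<Longrightarrow> v k = v k' \<longleftrightarrow> k = k'"
  using bij_betw_imp_inj_on[OF v_bij] by (auto dest: inj_onD)

lemma label_index_in_range: "(k - 1) mod l + 1 \<in> {1..l}"
proof -
  have "(k - 1) mod l < l"
    using period_ge_4 by simp
  then show ?thesis
    by simp
qed

lemma label_in_cycle: "label k \<in> C"
  unfolding label_def using bij_betwE[OF lab_bij] label_index_in_range by blast

lemma label_eq_iff:
  assumes "1 \<le> k" "1 \<le> k'"
  shows "label k = label k' \<longleftrightarrow> k mod l = k' mod l"
proof -
  have "label k = label k' \<longleftrightarrow> (k - 1) mod l = (k' - 1) mod l"
    unfolding label_def using bij_betw_imp_inj_on[OF lab_bij] label_index_in_range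
    by (auto dest: inj_onD)
  also have "\<dots> \<longleftrightarrow> Suc (k - 1) mod l = Suc (k' - 1) mod l"
    by (rule Suc_mod_eq_iff[symmetric])
  finally show ?thesis
    using assms by simp
qed

lemma label_cong_mod: "1 \<le> k \<Longrightarrow> 1 \<le> k' \<Longrightarrow> k mod l = k' mod l \<Longrightarrow> label k = label k'"
  using label_eq_iff by blast

lemma label_add_multiple_period: "1 \<le> k \<Longrightarrow> label (k + j * l) = label k"
  by (simp add: label_eq_iff)

lemma label_add_period: "1 \<le> k \<Longrightarrow> label (k + l) = label k"
  by (simp add: label_eq_iff)

lemma label_Suc_neq: "1 \<le> k \<Longrightarrow> label (Suc k) \<noteq> label k"
  using period_ge_4 by (simp add: label_eq_iff mod_Suc)

lemma label_Suc_Suc_neq: "1 \<le> k \<Longrightarrow> label (Suc (Suc k)) \<noteq> label k"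
  using period_ge_4 by (simp add: label_eq_iff mod_Suc)

lemma coil_cell_v: "k \<in> {1..L} \<Longrightarrow> coil_cell (v k) = label k"
  using grid_cell_eqI[OF coil_gridding] is_cycle_grid_edge[OF is_cycle_C label_in_cycle] coil_cells
  unfolding label_def grid_edge_def by simp

lemma coil_arrow_Suc: "1 \<le> k \<Longrightarrow> Suc k \<le> L \<Longrightarrow> orient_arrow m n c r pi vo ho (v k) (v (Suc k))"
  using coil_step[rule_format, of "Suc k"] by simp

lemma coil_arrow_back:
  "1 \<le> k \<Longrightarrow> k + l + 1 \<le> L \<Longrightarrow> orient_arrow m n c r pi vo ho (v (k + l + 1)) (v k)"
  using coil_back[rule_format, of "k + l + 1"] by simp

lemma coil_arrow_cases:
  assumes "orient_arrow m n c r pi vo ho (v k) (v k')" "k \<in> {1..L}" "k' \<in> {1..L}"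
  shows "fst (label k) = fst (label k') \<and> precedes (c (fst (label k)) = 1) (v k) (v k') \<or>
    snd (label k) = snd (label k') \<and> precedes (r (snd (label k)) = 1) (pi (v k)) (pi (v k'))"
  using orient_arrow_cases[OF coil_gridding assms(1)]
  unfolding coil_cell_v[OF assms(2)] coil_cell_v[OF assms(3)] .

lemma coil_arrows_via_other_cell:
  assumes "orient_arrow m n c r pi vo ho (v i) (v j)" "orient_arrow m n c r pi vo ho (v j) (v k)"
    "i \<in> {1..L}" "j \<in> {1..L}" "k \<in> {1..L}" "label k = label i" "label j \<noteq> label i"
  shows "fst (label j) = fst (label i) \<and>
      precedes (c (fst (label i)) = 1) (v i) (v j) \<and> precedes (c (fst (label i)) = 1) (v j) (v k) \<or>
    snd (label j) = snd (label i) \<and>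
      precedes (r (snd (label i)) = 1) (pi (v i)) (pi (v j)) \<and>
      precedes (r (snd (label i)) = 1) (pi (v j)) (pi (v k))"
proof -
  have "\<not> (fst (label j) = fst (label i) \<and> snd (label j) = snd (label i))"
    using assms(7) by (simp add: prod_eq_iff)
  then show ?thesis
    using coil_arrow_cases[OF assms(1,3,4)] coil_arrow_cases[OF assms(2,4,5)]
    unfolding assms(6) by (metis (full_types))
qed

lemma coil_orders_agree:
  assumes "k \<in> {1..L}" "k' \<in> {1..L}" "k \<noteq> k'" "label k' = label k"
  shows "precedes (c (fst (label k)) = 1) (v k) (v k') \<longleftrightarrow>
    precedes (r (snd (label k)) = 1) (pi (v k)) (pi (v k'))"
  using cycle_cell_orders_agree[OF signs coil_gridding perm] assms coil_cell_v v_in_range v_eq_iff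
    is_cycle_grid_edge[OF is_cycle_C label_in_cycle]
  by metis

(* For i > 1 the arrows v (i + l) -> v (i - 1) -> v i run along the line shared by the distinct
   cells of v (i - 1) and v i, and for i = 1 there is (C4); column and row orientation agree in the
   cycle cell of v i. *)
lemma lap_precedes:
  assumes "1 \<le> i" "i + l \<le> L"
  shows "precedes (c (fst (label i)) = 1) (v (i + l)) (v i) \<and>
    precedes (r (snd (label i)) = 1) (pi (v (i + l))) (pi (v i))"
proof -
  have idx: "i \<in> {1..L}" "i + l \<in> {1..L}" and same: "label (i + l) = label i"
    using assms label_add_period by auto
  have "precedes (c (fst (label i)) = 1) (v (i + l)) (v i) \<or>
    precedes (r (snd (label i)) = 1) (pi (v (i + l))) (pi (v i))"
  proof (cases "i = 1")
    case True
    then show ?thesis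
      using coil_arrow_cases[OF coil_close] idx same by (simp add: add.commute)
  next
    case False
    then have "1 \<le> i - 1"
      using assms(1) by linarith
    then have "orient_arrow m n c r pi vo ho (v (i + l)) (v (i - 1))"
      "orient_arrow m n c r pi vo ho (v (i - 1)) (v i)" "i - 1 \<in> {1..L}"
      using assms coil_arrow_back[of "i - 1"] coil_arrow_Suc[of "i - 1"] by simp_all
    moreover have "label (i - 1) \<noteq> label (i + l)"
      using label_Suc_neq[OF \<open>1 \<le> i - 1\<close>] assms(1) same by (simp add: eq_commute)
    ultimately show ?thesis
      using coil_arrows_via_other_cell[of "i + l" "i - 1" i] idx same precedes_trans by fastforce
  qed
  moreover have "v (i + l) \<noteq> v i"
    using idx v_eq_iff period_ge_4 by auto
  ultimately show ?thesis
    using coil_orders_agree[OF idx(2,1)] idx same v_eq_iff by (auto simp: same)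
qed

lemma laps_precede:
  assumes "1 \<le> i" "i + Suc j * l \<le> L"
  shows "precedes (c (fst (label i)) = 1) (v (i + Suc j * l)) (v i) \<and>
    precedes (r (snd (label i)) = 1) (pi (v (i + Suc j * l))) (pi (v i))"
  using assms(2)
proof (induction j)
  case 0
  then show ?case
    using lap_precedes[OF assms(1)] by simp
next
  case (Suc j)
  have "1 \<le> i + Suc j * l" "i + Suc j * l + l \<le> L" "i + Suc j * l \<le> L"
    using assms(1) Suc.prems by (simp_all add: algebra_simps)
  moreover have "i + Suc j * l + l = i + Suc (Suc j) * l"
    by simp
  ultimately have
    "precedes (c (fst (label i)) = 1) (v (i + Suc (Suc j) * l)) (v (i + Suc j * l)) \<and>
     precedes (r (snd (label i)) = 1) (pi (v (i + Suc (Suc j) * l))) (pi (v (i + Suc j * l)))"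
    using lap_precedes[of "i + Suc j * l"] label_add_multiple_period[OF assms(1)] by metis
  then show ?case
    using Suc.IH[OF \<open>i + Suc j * l \<le> L\<close>] precedes_trans by blast
qed

definition crossings :: "(nat \<Rightarrow> nat) \<Rightarrow> nat \<Rightarrow> nat set" where
  "crossings f t = {i \<in> {1..L}. i + l \<le> L \<and> separates t (f i) (f (i + l))}"

lemma card_col_crossings_le: "card (crossings v t) \<le> l"
  unfolding crossings_def
proof (rule card_separated_laps_le[where up = "\<lambda>i. c (fst (label i)) = 1"])
  fix i j assume "1 \<le> i" "1 \<le> j" "i + j * l \<le> L"
  then show "precedes (c (fst (label i)) = 1) (v (i + j * l)) (v i)"
    using laps_precede[of i "j - 1"] by simp
next
  fix i i' assume "1 \<le> i" "1 \<le> i'" "i mod l = i' mod l"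
  from label_cong_mod[OF this] show "(c (fst (label i)) = 1) = (c (fst (label i')) = 1)"
    by simp
qed (use period_ge_4 in simp)

lemma card_row_crossings_le: "card (crossings (\<lambda>k. pi (v k)) t) \<le> l"
  unfolding crossings_def
proof (rule card_separated_laps_le[where up = "\<lambda>i. r (snd (label i)) = 1"])
  fix i j assume "1 \<le> i" "1 \<le> j" "i + j * l \<le> L"
  then show "precedes (r (snd (label i)) = 1) (pi (v (i + j * l))) (pi (v i))"
    using laps_precede[of i "j - 1"] by simp
next
  fix i i' assume "1 \<le> i" "1 \<le> i'" "i mod l = i' mod l"
  from label_cong_mod[OF this] show "(r (snd (label i)) = 1) = (r (snd (label i')) = 1)"
    by simp
qed (use period_ge_4 in simp)

definition breaks :: "nat set" where
  "breaks = {i \<in> {1..L}. i + l \<le> L \<and> new_cell (v (i + l)) \<noteq> new_cell (v i)}"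

lemma breaks_subset_crossings:
  "breaks \<subseteq> (\<Union>s\<in>{1..m}. crossings v (vv s)) \<union> (\<Union>s\<in>{1..n}. crossings (\<lambda>k. pi (v k)) (hh s))"
proof
  fix i assume "i \<in> breaks"
  then have i: "i \<in> {1..L}" "i + l \<le> L" "i + l \<in> {1..L}" and
    "grid_index vv (v i) \<noteq> grid_index vv (v (i + l)) \<or>
     grid_index hh (pi (v i)) \<noteq> grid_index hh (pi (v (i + l)))"
    unfolding breaks_def grid_cell_def by auto
  then show "i \<in> (\<Union>s\<in>{1..m}. crossings v (vv s)) \<union> (\<Union>s\<in>{1..n}. crossings (\<lambda>k. pi (v k)) (hh s))"
    using grid_index_neq_separates[OF is_gridding_grid_lines(1)[OF new_gridding], of "v i" "v (i + l)"]
      grid_index_neq_separates[OF is_gridding_grid_lines(2)[OF new_gridding],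
        of "pi (v i)" "pi (v (i + l))"]
      v_in_range pi_in_range
    unfolding crossings_def by blast
qed

lemma card_breaks_le: "card breaks \<le> (m + n) * l"
proof -
  have "finite (crossings f t)" for f t
    unfolding crossings_def by simp
  then have "card breaks \<le>
      card ((\<Union>s\<in>{1..m}. crossings v (vv s)) \<union> (\<Union>s\<in>{1..n}. crossings (\<lambda>k. pi (v k)) (hh s)))"
    by (intro card_mono[OF _ breaks_subset_crossings]) simp
  also have "\<dots> \<le> card (\<Union>s\<in>{1..m}. crossings v (vv s)) +
      card (\<Union>s\<in>{1..n}. crossings (\<lambda>k. pi (v k)) (hh s))"
    by (rule card_Un_le)
  also have "\<dots> \<le> (\<Sum>s\<in>{1..m}. card (crossings v (vv s))) + (\<Sum>s\<in>{1..n}. card (crossings (\<lambda>k. pi (v k)) (hh s)))"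
    by (intro add_mono card_UN_le) simp_all
  also have "\<dots> \<le> (\<Sum>s\<in>{1..m}. l) + (\<Sum>s\<in>{1..n}. l)"
    by (intro add_mono sum_mono card_col_crossings_le card_row_crossings_le)
  finally show ?thesis
    by (simp add: algebra_simps)
qed

lemma lap_interleave:
  assumes "1 \<le> i" "i + l + 1 \<le> L"
  shows "fst (label (Suc i)) = fst (label i) \<and> between (v (i + l)) (v (i + l + 1)) (v i) \<or>
    snd (label (Suc i)) = snd (label i) \<and> between (pi (v (i + l))) (pi (v (i + l + 1))) (pi (v i))"
proof -
  have labels: "label (i + l) = label i" "label (i + l + 1) = label (Suc i)"
    using assms(1) label_add_period[of i] label_add_period[of "Suc i"] by simp_all
  have "orient_arrow m n c r pi vo ho (v (i + l)) (v (i + l + 1))"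
    "orient_arrow m n c r pi vo ho (v (i + l + 1)) (v i)"
    using assms coil_arrow_Suc[of "i + l"] coil_arrow_back[of i] by simp_all
  moreover have "label (i + l + 1) \<noteq> label (i + l)"
    using label_Suc_neq[of "i + l"] assms(1) by simp
  ultimately show ?thesis
    using coil_arrows_via_other_cell[of "i + l" "i + l + 1" i] assms precedes_between
    unfolding labels by fastforce
qed

lemma turns_alternate:
  assumes "1 \<le> i" "i + 2 \<le> L"
  shows "fst (label (Suc (Suc i))) = fst (label (Suc i)) \<longleftrightarrow> fst (label (Suc i)) \<noteq> fst (label i)"
proof -
  have share: "label (Suc k) \<noteq> label k \<and>
      (fst (label (Suc k)) = fst (label k) \<or> snd (label (Suc k)) = snd (label k))"
    if "1 \<le> k" "Suc k \<le> L" for k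
    using coil_arrow_cases[OF coil_arrow_Suc[OF that]] label_Suc_neq[OF that(1)] that by auto
  have "label (Suc (Suc i)) \<noteq> label i"
    using label_Suc_Suc_neq[OF assms(1)] .
  then show ?thesis
    using share[of i] share[of "Suc i"] assms
      is_cycle_no_three_in_col[OF is_cycle_C label_in_cycle label_in_cycle label_in_cycle,
        of i "Suc i" "Suc (Suc i)"]
      is_cycle_no_three_in_row[OF is_cycle_C label_in_cycle label_in_cycle label_in_cycle,
        of i "Suc i" "Suc (Suc i)"]
    by (auto simp: prod_eq_iff)
qed

(* B = v (i + l + 1) lies between A = v (i + l) and A' = v i along the line shared by the coil
   cells of B and A, so it stays in the new column (row) of A and A'. It cannot share their new
   cell: monotonicity of that cell would put B between them along the other axis too, i.e. in
   their coil row (column). *)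
lemma new_cells_step:
  assumes "1 \<le> i" "i + l + 1 \<le> L" and lap: "new_cell (v (i + l)) = new_cell (v i)"
  shows "new_cell (v (i + l + 1)) \<noteq> new_cell (v i) \<and>
    (if fst (label (Suc i)) = fst (label i) then fst (new_cell (v (i + l + 1))) = fst (new_cell (v i))
     else snd (new_cell (v (i + l + 1))) = snd (new_cell (v i)))"
proof -
  define A B A' where "A = v (i + l)" and "B = v (i + l + 1)" and "A' = v i"
  have idx: "i + l \<in> {1..L}" "i + l + 1 \<in> {1..L}" "i \<in> {1..L}"
    using assms(1,2) by simp_all
  then have pts: "A \<in> {1..L}" "B \<in> {1..L}" "A' \<in> {1..L}" "distinct [A, B, A']"
    using v_in_range v_eq_iff period_ge_4 unfolding A_def B_def A'_def by auto
  have coil: "coil_cell A = label i" "coil_cell A' = label i" "coil_cell B = label (Suc i)"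
    using coil_cell_v[OF idx(1)] coil_cell_v[OF idx(2)] coil_cell_v[OF idx(3)] label_add_period[of i]
      label_add_period[of "Suc i"] assms(1)
    unfolding A_def B_def A'_def by simp_all
  have "label (Suc i) \<noteq> label i"
    using label_Suc_neq[OF assms(1)] .
  note lines = is_gridding_grid_lines[OF coil_gridding] is_gridding_grid_lines[OF new_gridding]
  have same_new_cell: "between A B A' \<longleftrightarrow> between (pi A) (pi B) (pi A')"
    if "new_cell B = new_cell A'"
    using gridding_between_iff[OF gridding_matrix new_gridding perm pts] that lap
    unfolding A_def B_def A'_def by simp
  from lap_interleave[OF assms(1,2), folded A_def B_def A'_def] show ?thesis
  proof (elim disjE conjE)
    assume col: "fst (label (Suc i)) = fst (label i)" and btw: "between A B A'"
    have "grid_index ho (pi B) \<noteq> grid_index ho (pi A)"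
      using coil col \<open>label (Suc i) \<noteq> label i\<close> unfolding grid_cell_def by (auto simp: prod_eq_iff)
    then have "new_cell B \<noteq> new_cell A'"
      using same_new_cell btw grid_index_between[OF lines(2)] coil pi_in_range pts(1,3)
      unfolding grid_cell_def by (metis atLeastAtMost_iff prod.inject)
    moreover have "grid_index vv B = grid_index vv A'"
      using grid_index_between[OF lines(3) btw] pts lap unfolding A_def A'_def grid_cell_def by simp
    ultimately show ?thesis
      using col unfolding A_def B_def A'_def grid_cell_def by simp
  next
    assume row: "snd (label (Suc i)) = snd (label i)" and btw: "between (pi A) (pi B) (pi A')"
    have turn: "fst (label (Suc i)) \<noteq> fst (label i)"
      using row \<open>label (Suc i) \<noteq> label i\<close> by (auto simp: prod_eq_iff)
    have "grid_index vo B \<noteq> grid_index vo A"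
      using coil row \<open>label (Suc i) \<noteq> label i\<close> unfolding grid_cell_def by (auto simp: prod_eq_iff)
    then have "new_cell B \<noteq> new_cell A'"
      using same_new_cell btw grid_index_between[OF lines(1)] coil pts(1,3)
      unfolding grid_cell_def by (metis atLeastAtMost_iff prod.inject)
    moreover have "grid_index hh (pi B) = grid_index hh (pi A')"
      using grid_index_between[OF lines(4) btw] pts pi_in_range lap
      unfolding A_def A'_def grid_cell_def by simp
    ultimately show ?thesis
      using turn unfolding A_def B_def A'_def grid_cell_def by simp
  qed
qed

definition unbroken_window :: "nat \<Rightarrow> bool" where
  "unbroken_window a \<longleftrightarrow> 1 \<le> a \<and> a + 2 * l \<le> L \<and> (\<forall>i. a \<le> i \<longrightarrow> i \<le> a + l \<longrightarrow> i \<notin> breaks)"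

definition window_cell :: "nat \<Rightarrow> nat \<Rightarrow> nat \<times> nat" where
  "window_cell a u = new_cell (v (a + u mod l))"

definition window_col_turn :: "nat \<Rightarrow> nat \<Rightarrow> bool" where
  "window_col_turn a u \<longleftrightarrow> fst (label (Suc (a + u))) = fst (label (a + u))"

lemma unbroken_window_lap:
  assumes "unbroken_window a" "a \<le> i" "i \<le> a + l"
  shows "new_cell (v (i + l)) = new_cell (v i)"
  using assms unfolding unbroken_window_def breaks_def by auto

lemma unbroken_window_cell:
  assumes "unbroken_window a" "u \<le> 2 * l"
  shows "new_cell (v (a + u)) = window_cell a u"
  using assms(2)
proof (induction u rule: less_induct)
  case (less u)
  show ?case
  proof (cases "u < l")
    case False
    then have "new_cell (v (a + u)) = new_cell (v (a + (u - l)))"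
      using unbroken_window_lap[OF assms(1), of "a + (u - l)"] less.prems by simp
    also have "\<dots> = window_cell a (u - l)"
      using less.IH[of "u - l"] less.prems period_ge_4 False by simp
    finally show ?thesis
      using False by (simp add: window_cell_def le_mod_geq)
  qed (simp add: window_cell_def)
qed

lemma unbroken_window_turn:
  assumes "unbroken_window a" "u < l"
  shows "window_cell a (Suc u) \<noteq> window_cell a u \<and>
    (if window_col_turn a u then fst (window_cell a (Suc u)) = fst (window_cell a u)
     else snd (window_cell a (Suc u)) = snd (window_cell a u)) \<and>
    (window_col_turn a (Suc u) \<longleftrightarrow> \<not> window_col_turn a u)"
proof -
  have i: "1 \<le> a + u" "a + u + l + 1 \<le> L" "a + u + 2 \<le> L"
    using assms period_ge_4 unfolding unbroken_window_def by simp_all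
  have lap: "new_cell (v (a + u + l)) = new_cell (v (a + u))"
    using unbroken_window_lap[OF assms(1), of "a + u"] assms(2) by simp
  have current: "new_cell (v (a + u)) = window_cell a u"
    using unbroken_window_cell[OF assms(1), of u] assms(2) by simp
  have "a + u + l + 1 = a + (Suc u + l)"
    by simp
  moreover have "window_cell a (Suc u + l) = window_cell a (Suc u)"
    unfolding window_cell_def by (simp only: mod_add_self2)
  ultimately have following: "new_cell (v (a + u + l + 1)) = window_cell a (Suc u)"
    using unbroken_window_cell[OF assms(1), of "Suc u + l"] assms(2) by (simp add: add.assoc)
  show ?thesis
    using new_cells_step[OF i(1,2) lap, unfolded following current] turns_alternate[OF i(1,3)]
    unfolding window_col_turn_def by simp
qed

lemma unbroken_window_in_cycle:
  assumes a: "unbroken_window a" and k: "a \<le> k" "k \<le> a + 2 * l"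
  shows "new_cell (v k) \<in> C"
proof -
  let ?E = "window_cell a" and ?turn = "window_col_turn a"
  define S where "S u \<longleftrightarrow> ?E (Suc u) \<noteq> ?E u \<and>
    (if ?turn u then fst (?E (Suc u)) = fst (?E u) else snd (?E (Suc u)) = snd (?E u)) \<and>
    (?turn (Suc u) \<longleftrightarrow> \<not> ?turn u)" for u
  have cell_per: "?E (u + l) = ?E u" for u
    unfolding window_cell_def by simp
  moreover have turn_per: "?turn (u + l) = ?turn u" for u
    using label_add_period[of "a + u"] label_add_period[of "Suc (a + u)"] a
    unfolding window_col_turn_def unbroken_window_def add.assoc[symmetric] by simp
  ultimately have "S (u + l) = S u" for u
    using cell_per[of "Suc u"] turn_per[of "Suc u"] unfolding S_def by simp
  moreover have "S u" if "u < l" for u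
    using unbroken_window_turn[OF a that] unfolding S_def .
  ultimately have "S u" for u
    using periodic_mod[of S l] period_ge_4 by (metis mod_less_divisor zero_less_numeral
        order_less_le_trans)
  moreover have "grid_edge m n M (?E u)" for u
  proof -
    have "u mod l < l"
      using period_ge_4 by simp
    then have "v (a + u mod l) \<in> {1..L}"
      using a v_in_range unfolding unbroken_window_def by simp
    then show ?thesis
      unfolding window_cell_def using grid_cell_grid_edge[OF new_gridding] pi_in_range by simp
  qed
  ultimately have "?E u \<in> C" for u
    using turning_cell_sequence_in_cycle[OF unicyclic is_cycle_C, of ?E ?turn] cell_per turn_per
    unfolding S_def period[symmetric] by blast
  then show ?thesis
    using unbroken_window_cell[OF a, of "k - a"] k by simp
qed

lemma misplaced_near_breaks:
  assumes "2 * l < L"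
  shows "misplaced m n M L pi vv hh \<subseteq> v ` (\<Union>b\<in>breaks. {b - 2 * l..b + 2 * l})"
proof
  fix p assume "p \<in> misplaced m n M L pi vv hh"
  then have p: "p \<in> {1..L}" and outside: "\<forall>P\<in>C. \<not> in_cell pi vv hh P p"
    unfolding misplaced_def cycle by auto
  obtain k where k: "k \<in> {1..L}" "p = v k"
    using p bij_betw_imp_surj_on[OF v_bij] by blast
  have "new_cell (v k) \<notin> C"
    using grid_cell_in_cell(2)[OF new_gridding p pi_in_range[OF p]] outside k(2) by blast
  define a where "a = (if k + 2 * l \<le> L then k else L - 2 * l)"
  have a: "1 \<le> a" "a + 2 * l \<le> L" "a \<le> k" "k \<le> a + 2 * l"
    using assms k(1) unfolding a_def by auto
  then obtain b where b: "a \<le> b" "b \<le> a + l" "b \<in> breaks"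
    using unbroken_window_in_cycle[of a k] \<open>new_cell (v k) \<notin> C\<close>
    unfolding unbroken_window_def by blast
  then have "k \<in> {b - 2 * l..b + 2 * l}"
    using a(3,4) by simp
  then have "k \<in> (\<Union>b\<in>breaks. {b - 2 * l..b + 2 * l})"
    using b(3) by blast
  then show "p \<in> v ` (\<Union>b\<in>breaks. {b - 2 * l..b + 2 * l})"
    using k(2) by blast
qed

lemma card_misplaced_le: "card (misplaced m n M L pi vv hh) \<le> 2 * l + (m + n) * l * (4 * l + 1)"
proof (cases "L \<le> 2 * l")
  case True
  have "misplaced m n M L pi vv hh \<subseteq> {1..L}"
    unfolding misplaced_def by auto
  from card_mono[OF _ this] True show ?thesis
    by simp
next
  case False
  let ?U = "\<Union>b\<in>breaks. {b - 2 * l..b + 2 * l}"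
  have "finite breaks"
    unfolding breaks_def by simp
  then have "card (misplaced m n M L pi vv hh) \<le> card (v ` ?U)"
    using misplaced_near_breaks False by (intro card_mono) simp_all
  also have "\<dots> \<le> card ?U"
    using \<open>finite breaks\<close> by (intro card_image_le) simp
  also have "\<dots> \<le> (\<Sum>b\<in>breaks. card {b - 2 * l..b + 2 * l})"
    by (rule card_UN_le[OF \<open>finite breaks\<close>])
  also have "\<dots> \<le> card breaks * (4 * l + 1)"
    using sum_mono[of breaks "\<lambda>b. card {b - 2 * l..b + 2 * l}" "\<lambda>_. 4 * l + 1"] by simp
  also have "\<dots> \<le> (m + n) * l * (4 * l + 1)"
    using card_breaks_le by (rule mult_right_mono) simp
  finally show ?thesis
    by simp
qed

end

theorem lemma5p6:
  fixes m n :: nat and M :: "nat \<Rightarrow> nat \<Rightarrow> int" and c r :: "nat \<Rightarrow> int"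
  assumes "gridding_matrix m n M"
    and "unicyclic m n M"
    and "pmm_signs m n M c r"
  shows "\<exists>B::nat. \<forall>L pi vv hh.
           is_coil m n M c r L pi \<and> is_gridding m n M L pi vv hh
           \<longrightarrow> card (misplaced m n M L pi vv hh) \<le> B"
proof -
  define l where "l = card (the_cycle m n M)"
  have "card (misplaced m n M L pi vv hh) \<le> 2 * l + (m + n) * l * (4 * l + 1)"
    if coil: "is_coil m n M c r L pi" and gridding: "is_gridding m n M L pi vv hh" for L pi vv hh
  proof -
    obtain vo ho v lab where "is_perm L pi" "is_gridding m n M L pi vo ho"
      "bij_betw v {1..L} {1..L}" "bij_betw lab {1..l} (the_cycle m n M)"
      "\<forall>k\<in>{1..L}. in_cell pi vo ho (lab ((k - 1) mod l + 1)) (v k)"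
      "\<forall>k. 1 < k \<and> k \<le> L \<longrightarrow> orient_arrow m n c r pi vo ho (v (k - 1)) (v k)"
      "\<forall>k. l + 1 < k \<and> k \<le> L \<longrightarrow> orient_arrow m n c r pi vo ho (v k) (v (k - l - 1))"
      "orient_arrow m n c r pi vo ho (v (l + 1)) (v 1)"
      using coil unfolding is_coil_def is_gridded_coil_def Let_def l_def by blast
    then interpret coil_regridding m n M c r L pi vo ho v lab vv hh "the_cycle m n M" l
      using assms gridding l_def by unfold_locales simp_all
    show ?thesis
      by (rule card_misplaced_le)
  qed
  then show ?thesis
    by blast
qed

end
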